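(* Let $p$ be a prime, $n\ge0$, $X$ a set and $\mathbb Z(X)$ the free abelian group on $X$. Then $W_{n+1,p}(\mathbb Z;\mathbb Z(X))$ is a free abelian group with basis the elements $V^i\tau^{n-i}(x_1\otimes\cdots\otimes x_{p^i})$, where $0\le i\le n$ and $(x_1,\dots,x_{p^i})$ runs over a set of representatives of the orbits $X^{\times p^i}/C_{p^i}$. Moreover, for sets $X,Y$, the monoidal structure map $\star\colon W_{n+1,p}(\mathbb Z;\mathbb Z(X))\otimes W_{n+1,p}(\mathbb Z;\mathbb Z(Y))\to W_{n+1,p}(\mathbb Z;\mathbb Z(X)\otimes\mathbb Z(Y))$ satisfies, for $i\le j$, $$V^i\tau^{n-i}(\otimes_{l=1}^{p^i}x_l)\star V^j\tau^{n-j}(\otimes_{h=1}^{p^j}y_h)=\sum_{\sigma\in C_{p^i}}V^j\Big(\tau^{n-j}\big((\sigma(\otimes_{l=1}^{p^i}x_l))^{\otimes p^{j-i}}\otimes(\otimes_{h=1}^{p^j}y_h)\big)\Big),$$ and symmetrically for $j\le i$: $$V^i\tau^{n-i}(\otimes_{l=1}^{p^i}x_l)\star V^j\tau^{n-j}(\otimes_{h=1}^{p^j}y_h)=\sum_{\sigma\in C_{p^j}}V^i\Big(\tau^{n-i}\big((\otimes_{l=1}^{p^i}x_l)\otimes(\sigma(\otimes_{h=1}^{p^j}y_h))^{\otimes p^{i-j}}\big)\Big),$$ where $A^{\otimes p^k}\otimes B^{\otimes p^k}$ is identified with $(A\otimes B)^{\otimes p^k}$ via the shuffle isomorphism.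
   Context: Notation: for an $R$-bimodule $M$, $M^{\otimes_R k}$ is the tensor power over $R$, $M^{\circledcirc_R k}=M^{\otimes_R k}/[R,M^{\otimes_R k}]$ with cyclic $C_k$-action, transfers are sums over cosets, $x^{\otimes p^k}$ is the image of the $p^k$-fold tensor power, and ghost maps are $w_j(m_0,\dots,m_n)=\sum_{i=0}^j\mathrm{tr}^{C_{p^j}}_{C_{p^{j-i}}}(m_i^{\otimes p^{j-i}})$. $W_{n+1,p}(R;M)$ is the quotient of $\prod_{i=0}^nM^{\otimes_Rp^i}$ by the equivalence relation generated by: $a\sim b$ if for a free resolution $(\bar S;\bar Q)\rightrightarrows^{f,g}(S;Q)\xrightarrow\epsilon(R;M)$ there are $q,u,z$ with $\epsilon_*q=a,\epsilon_*u=b,w(q)=w(f_*z),w(u)=w(g_*z)$; for $(\mathbb Z;\mathbb Z(X))$ it is just the quotient making $w$ injective. It has the unique natural abelian group and lax symmetric monoidal structure ($\star$) making all $w_j$ additive and monoidal. Operators: $\tau^{k}\colon M^{\otimes_R p^i}\to W_{k+1,p}(R;M^{\otimes_Rp^i})$, $m\mapsto(m,0,\dots,0)$ (Teichmüller map), and $V^i\colon W_{k+1,p}(R;M^{\otimes_Rp^i})\to W_{k+i+1,p}(R;M)$, $(x_0,\dots,x_k)\mapsto(0,\dots,0,x_0,\dots,x_k)$ ($i$ zeros), using $(M^{\otimes_Rp^i})^{\otimes_Rp^l}\cong M^{\otimes_Rp^{i+l}}$. Thus $V^i\tau^{n-i}(y)$ is the class of the sequence with $y$ in position $i$ and $0$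 elsewhere. *)

theory Defs
  imports Main "HOL-Computational_Algebra.Primes"
begin

text \<open>Z(X)^{tensor k} = Z(X^k): finitely supported integer functions on k-tuples
  (lists of length k) with entries in X.\<close>
definition tensor_pow_grp :: "'a set \<Rightarrow> nat \<Rightarrow> ('a list \<Rightarrow> int) set" where
  "tensor_pow_grp X k = {f. finite {L. f L \<noteq> 0} \<and>
      (\<forall>L. f L \<noteq> 0 \<longrightarrow> length L = k \<and> set L \<subseteq> X)}"

text \<open>r-fold tensor power of f in Z(X^k), landing in Z(X^(r*k)).\<close>
definition tpow :: "nat \<Rightarrow> nat \<Rightarrow> ('a list \<Rightarrow> int) \<Rightarrow> ('a list \<Rightarrow> int)" where
  "tpow k r f = (\<lambda>L. if length L = r * k
      then (\<Prod>t<r. f (take k (drop (t * k) L))) else 0)"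

text \<open>Witt vector representatives: sequences (m_0,...,m_n), m_i in Z(X)^{tensor p^i}.\<close>
definition witt_seqs :: "'a set \<Rightarrow> nat \<Rightarrow> nat \<Rightarrow> (nat \<Rightarrow> 'a list \<Rightarrow> int) set" where
  "witt_seqs X p n = {m. (\<forall>i\<le>n. m i \<in> tensor_pow_grp X (p ^ i)) \<and> (\<forall>i>n. \<forall>L. m i L = 0)}"

text \<open>Ghost maps w_j(m) = sum_{i<=j} tr^{C_{p^j}}_{C_{p^{j-i}}} (m_i^{tensor p^(j-i)}),
  the transfer being the sum over the coset representatives (rotations by s < p^i).\<close>
definition witt_ghost :: "nat \<Rightarrow> nat \<Rightarrow> (nat \<Rightarrow> 'a list \<Rightarrow> int) \<Rightarrow> (nat \<Rightarrow> 'a list \<Rightarrow> int)" where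
  "witt_ghost p n m = (\<lambda>j L. if j \<le> n then
      (\<Sum>i\<le>j. \<Sum>s<p ^ i. tpow (p ^ i) (p ^ (j - i)) (m i) (rotate s L)) else (0::int))"

text \<open>W_{n+1,p}(Z;Z(X)), represented via the injective ghost map as its image,
  with the group structure inherited from the ghost side.\<close>
definition witt_W :: "'a set \<Rightarrow> nat \<Rightarrow> nat \<Rightarrow> (nat \<Rightarrow> 'a list \<Rightarrow> int) set" where
  "witt_W X p n = witt_ghost p n ` witt_seqs X p n"

text \<open>The sequence with the basis tensor y in position i and 0 elsewhere,
  i.e. a representative of V^i tau^{n-i}(y).\<close>
definition Vtau :: "nat \<Rightarrow> 'a list \<Rightarrow> (nat \<Rightarrow> 'a list \<Rightarrow> int)" where
  "Vtau i y = (\<lambda>k. if k = i then (\<lambda>L. if L = y then 1 else 0) else (\<lambda>L. 0))"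

definition orbit_reps :: "'a set \<Rightarrow> nat \<Rightarrow> nat \<Rightarrow> (nat \<Rightarrow> 'a list set) \<Rightarrow> bool" where
  "orbit_reps X p n R \<longleftrightarrow> (\<forall>i\<le>n.
      (\<forall>r\<in>R i. length r = p ^ i \<and> set r \<subseteq> X) \<and>
      (\<forall>x. length x = p ^ i \<and> set x \<subseteq> X \<longrightarrow> (\<exists>!r\<in>R i. \<exists>s. x = rotate s r)))"

definition coeffs :: "nat \<Rightarrow> (nat \<Rightarrow> 'a list set) \<Rightarrow> (nat \<times> 'a list \<Rightarrow> int) set" where
  "coeffs n R = {c. finite {k. c k \<noteq> 0} \<and> (\<forall>i r. c (i, r) \<noteq> 0 \<longrightarrow> i \<le> n \<and> r \<in> R i)}"

definition lincomb :: "nat \<Rightarrow> nat \<Rightarrow> (nat \<times> 'a list \<Rightarrow> int) \<Rightarrow> (nat \<Rightarrow> 'a list \<Rightarrow> int)" where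
  "lincomb p n c = (\<lambda>j L. \<Sum>k\<in>{k. c k \<noteq> 0}. c k * witt_ghost p n (Vtau (fst k) (snd k)) j L)"

text \<open>Ghost-level monoidal product: w_j(a star b) = w_j(a) tensor w_j(b), with
  Z(X^k) tensor Z(Y^k) = Z((X x Y)^k) via the shuffle (zip) isomorphism.\<close>
definition ghost_star :: "(nat \<Rightarrow> 'a list \<Rightarrow> int) \<Rightarrow> (nat \<Rightarrow> 'b list \<Rightarrow> int)
    \<Rightarrow> (nat \<Rightarrow> ('a \<times> 'b) list \<Rightarrow> int)" where
  "ghost_star A B = (\<lambda>j L. A j (map fst L) * B j (map snd L))"

end

theory Submission
  imports Defs "HOL-Number_Theory.Number_Theory"
begin

text \<open>
  The ghost components of a Witt vector form a family of rotation-invariant functions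
  g_j on X^(p^j), j \<le> n, satisfying Dwork's congruences
  g_j (N^(p^(j-u))) = g_(j-1) (N^(p^(j-1-u))) mod p^(j-u), which reduce to
  a^(p^(m+1)) = a^(p^m) mod p^(m+1). If such a family vanishes below level j, the congruence
  at level j makes each value divisible by the order of its stabiliser, so the level-j
  component is the orbit sum of a function supported on orbit representatives. Subtracting
  the corresponding combination of the V^j tau^(n-j)(r), resp. the ghost vector concentrated
  in degree j, and ascending in j shows that every such family is both a ghost vector and a
  combination of basis elements; comparing coefficients at the lowest level where two
  combinations differ gives independence. The product formula is checked on ghost components,
  where the k-th component of V^i tau^(n-i)(x) counts the rotations carrying a tuple to
  x^(p^(k-i)); the case j \<le> i follows from i \<le> j by swapping the factors.
\<close>

lemma sum_lessThan_add:
  fixes m n :: nat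
  shows "(\<Sum>i<m + n. f i) = (\<Sum>i<m. f i) + (\<Sum>i<n. f (m + i) :: 'b::comm_monoid_add)"
  by (induction n) (simp_all add: add.assoc)

lemma sum_periodic_shift:
  fixes h :: "nat \<Rightarrow> 'b::ab_group_add"
  assumes "\<And>s. h (s + m) = h s"
  shows "(\<Sum>s<m. h (s + t)) = (\<Sum>s<m. h s)"
proof (induction t)
  case (Suc t)
  have "(\<Sum>s<Suc m. h (s + t)) = h t + (\<Sum>s<m. h (Suc s + t))"
    by (subst sum.lessThan_Suc_shift) simp
  moreover have "(\<Sum>s<Suc m. h (s + t)) = (\<Sum>s<m. h (s + t)) + h t"
    using assms[of t] by (simp add: add.commute)
  ultimately show ?case using Suc by (simp add: add.commute)
qed simp

lemma periodic_add_mult: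
  fixes m s a :: nat
  assumes "\<And>s. h (s + m) = h s"
  shows "h (s + a * m) = h s"
  by (induction a) (simp_all add: assms add.assoc[symmetric] add.commute[of m])

lemma sum_periodic_mult:
  fixes h :: "nat \<Rightarrow> 'b::comm_ring_1"
  assumes "\<And>s. h (s + m) = h s"
  shows "(\<Sum>s<a * m. h s) = of_nat a * (\<Sum>s<m. h s)"
proof (induction a)
  case (Suc a)
  have "(\<Sum>s<Suc a * m. h s) = (\<Sum>s<a * m. h s) + (\<Sum>s<m. h (a * m + s))"
    using sum_lessThan_add[of h "a * m" m] by (simp add: add.commute)
  also have "(\<Sum>s<m. h (a * m + s)) = (\<Sum>s<m. h s)"
    using periodic_add_mult[of h m] assms by (simp add: add.commute)
  finally show ?case using Suc by (simp add: algebra_simps)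
qed simp

lemma sum_periodic_reflect:
  fixes h :: "nat \<Rightarrow> 'b::ab_group_add"
  assumes "\<And>s. h (s + m) = h s"
  shows "(\<Sum>s<m. h (a + m - s)) = (\<Sum>s<m. h s)"
proof -
  have "(\<Sum>s<m. h (a + m - s)) = (\<Sum>s<m. (\<lambda>u. h (u + Suc a)) (m - Suc s))"
    by (rule sum.cong) (auto intro!: arg_cong[where f = h])
  also have "\<dots> = (\<Sum>u<m. h (u + Suc a))" by (rule sum.nat_diff_reindex)
  also have "\<dots> = (\<Sum>s<m. h s)" using sum_periodic_shift assms by blast
  finally show ?thesis .
qed

text \<open>The tensor power N^(k) of a basis tensor N.\<close>

abbreviation lpow :: "nat \<Rightarrow> 'a list \<Rightarrow> 'a list" where
  "lpow k N \<equiv> concat (replicate k N)"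

lemma rotate_inj: "rotate n u = rotate n v \<Longrightarrow> u = v"
  by (induction n) (simp_all add: inj_eq[OF inj_rotate1])

lemma rotate_mult_period: "rotate d r = r \<Longrightarrow> rotate (a * d) r = r"
  by (induction a) (simp_all add: rotate_rotate[symmetric] add.commute)

lemma rotate_mod_period:
  assumes "rotate d r = r"
  shows "rotate (s mod d) r = rotate s r"
proof -
  have "rotate s r = rotate (s mod d) (rotate ((s div d) * d) r)"
    by (simp add: rotate_rotate)
  then show ?thesis using rotate_mult_period[OF assms] by simp
qed

lemma length_lpow [simp]: "length (lpow m x) = m * length x"
  by (induction m) simp_all

lemma lpow_lpow: "lpow a (lpow b x) = lpow (a * b) x"
  by (induction a) (simp_all add: replicate_add)

lemma rotate1_lpow: "rotate1 (lpow m x) = lpow m (rotate1 x)"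
proof (cases x)
  case (Cons a x')
  have "lpow m (a # x') @ [a] = a # lpow m (x' @ [a])" by (induction m) simp_all
  then show ?thesis using Cons by (cases m) simp_all
qed simp

lemma rotate_lpow: "rotate s (lpow m x) = lpow m (rotate s x)"
  by (induction s) (simp_all add: rotate1_lpow)

lemma lpow_zip:
  "length P = length Q \<Longrightarrow> lpow m (zip P Q) = zip (lpow m P) (lpow m Q)"
  by (induction m) simp_all

lemma lpow_of_rotate_period:
  assumes "rotate d r = r" "length r = k * d"
  shows "r = lpow k (take d r)"
  using assms
proof (induction k arbitrary: r)
  case (Suc k)
  define A B where "A = take d r" and "B = drop d r"
  have r: "r = A @ B" and lA: "length A = d" and lB: "length B = k * d"
    using Suc.prems by (simp_all add: A_def B_def)
  have BA: "B @ A = A @ B" using Suc.prems(1) r rotate_append[of A B] lA by simp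
  show ?case
  proof (cases k)
    case (Suc k')
    have "take d (B @ A) = A" "drop d (B @ A) = B" using BA lA by simp_all
    then have tB: "take d B = A" and dB: "drop d B @ A = B" using lB Suc by simp_all
    have "rotate d B = B"
    proof (cases "d < length B")
      case True then show ?thesis using dB tB rotate_drop_take[of d B] by simp
    next
      case False
      then have "d = 0 \<or> length B = d" using lB Suc by auto
      then show ?thesis by (auto intro: rotate_id)
    qed
    then have "B = lpow k A" using Suc.IH[of B] lB tB by simp
    then show ?thesis unfolding A_def[symmetric] using r by simp
  qed (use lA lB r in \<open>simp add: A_def[symmetric]\<close>)
qed simp

definition stab_count :: "nat \<Rightarrow> 'a list \<Rightarrow> int" where
  "stab_count K r = (\<Sum>s<K. if rotate s r = r then 1 else 0)"

lemma stab_count_prime_power: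
  assumes "prime p" "length r = p ^ j"
  shows "\<exists>u\<le>j. stab_count (p ^ j) r = int (p ^ (j - u)) \<and> r = lpow (p ^ (j - u)) (take (p ^ u) r)"
proof -
  have p0: "0 < p" using assms prime_gt_0_nat by blast
  define d where "d = (LEAST d. 0 < d \<and> rotate d r = r)"
  have d: "0 < d \<and> rotate d r = r"
    unfolding d_def by (rule LeastI[of _ "p ^ j"]) (use p0 assms in simp)
  have dmin: "\<And>e. 0 < e \<Longrightarrow> e < d \<Longrightarrow> rotate e r \<noteq> r"
    unfolding d_def using not_less_Least by blast
  have "rotate (p ^ j mod d) r = r" using rotate_mod_period[of d r "p ^ j"] d assms by simp
  then have "d dvd p ^ j" using dmin[of "p ^ j mod d"] d by (auto simp: mod_greater_zero_iff_not_dvd)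
  then obtain u where u: "u \<le> j" "d = p ^ u" using divides_primepow_nat[OF assms(1)] by blast
  have pj: "p ^ j = p ^ (j - u) * d" using u by (simp add: power_add[symmetric])
  define h where "h s = (if rotate s r = r then 1 else (0::int))" for s
  have per: "h (s + d) = h s" for s
    unfolding h_def using d by (simp add: rotate_rotate[symmetric])
  have "(\<Sum>s<d. h s) = (\<Sum>s<d. if s = 0 then 1 else 0)"
    by (rule sum.cong) (use dmin in \<open>fastforce simp: h_def\<close>)+
  then have "(\<Sum>s<d. h s) = 1" using d by simp
  then have "stab_count (p ^ j) r = int (p ^ (j - u))"
    unfolding stab_count_def h_def[symmetric] pj using sum_periodic_mult[of h d, OF per] by simp
  moreover have "r = lpow (p ^ (j - u)) (take d r)"
    by (rule lpow_of_rotate_period) (use d assms pj in auto)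
  ultimately show ?thesis using u by blast
qed

lemma stab_count_nonzero: "prime p \<Longrightarrow> length r = p ^ j \<Longrightarrow> stab_count (p ^ j) r \<noteq> 0"
  using stab_count_prime_power[of p r j] prime_gt_0_nat by force

lemma prod_lessThan_add:
  fixes m n :: nat
  shows "(\<Prod>i<m + n. f i) = (\<Prod>i<m. f i) * (\<Prod>i<n. f (m + i) :: 'b::comm_monoid_mult)"
  by (induction n) (simp_all add: mult.assoc)

lemma tpow_append:
  assumes "length A = a * k" "length B = b * k"
  shows "tpow k (a + b) f (A @ B) = tpow k a f A * tpow k b f B"
proof -
  have "(\<Prod>t<a. f (take k (drop (t * k) (A @ B)))) = (\<Prod>t<a. f (take k (drop (t * k) A)))"
  proof (rule prod.cong)
    fix t assume "t \<in> {..<a}"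
    then have "t * k + k \<le> a * k"
      by (metis Suc_leI lessThan_iff mult_Suc mult_le_mono1 add.commute)
    then show "f (take k (drop (t * k) (A @ B))) = f (take k (drop (t * k) A))"
      using assms by simp
  qed simp
  moreover have "(\<Prod>t<b. f (take k (drop ((a + t) * k) (A @ B))))
      = (\<Prod>t<b. f (take k (drop (t * k) B)))"
    using assms by (simp add: add_mult_distrib)
  ultimately show ?thesis
    unfolding tpow_def using assms by (simp add: prod_lessThan_add add_mult_distrib)
qed

lemma tpow_Suc_0 [simp]: "tpow k (Suc 0) f L = (if length L = k then f L else 0)"
  by (simp add: tpow_def)

lemma tpow_zero_fun: "0 < r \<Longrightarrow> tpow k r (\<lambda>L. 0) L = 0"
  by (auto simp: tpow_def)

lemma tpow_lpow:
  assumes "length N = k * q"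
  shows "tpow k (q * r) f (lpow r N) = tpow k q f N ^ r"
proof (induction r)
  case (Suc r)
  have "tpow k (q + q * r) f (N @ lpow r N) = tpow k q f N * tpow k (q * r) f (lpow r N)"
    by (rule tpow_append) (use assms in \<open>simp_all add: mult.commute mult.left_commute\<close>)
  then show ?case using Suc by simp
qed (simp add: tpow_def)

lemma tpow_lpow_single:
  "length N = k \<Longrightarrow> tpow k r f (lpow r N) = f N ^ r"
  using tpow_lpow[of N k 1 r f] by simp

lemma tpow_indicator:
  assumes "length x = k"
  shows "tpow k r (\<lambda>L. if L = x then 1 else 0) M = (if M = lpow r x then 1 else 0)"
proof (induction r arbitrary: M)
  case (Suc r)
  show ?case
  proof (cases "length M = Suc r * k")
    case True
    have "tpow k (1 + r) (\<lambda>L. if L = x then 1 else 0) (take k M @ drop k M)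
        = tpow k 1 (\<lambda>L. if L = x then 1 else 0) (take k M)
          * tpow k r (\<lambda>L. if L = x then 1 else 0) (drop k M)"
      by (rule tpow_append) (use True in auto)
    then have "tpow k (Suc r) (\<lambda>L. if L = x then 1 else 0) M
        = (if take k M = x then 1 else 0) * (if drop k M = lpow r x then 1 else 0)"
      using Suc True by simp
    also have "\<dots> = (if M = lpow (Suc r) x then 1 else 0)"
      using assms True by (auto simp: append_eq_conv_conj) (metis append_take_drop_id)
    finally show ?thesis .
  qed (use assms in \<open>auto simp: tpow_def\<close>)
qed (simp add: tpow_def)

lemma tpow_rotate:
  assumes "0 < r"
  shows "tpow k r f (rotate k L) = tpow k r f L"
proof (cases "length L = r * k")
  case True
  obtain r' where r: "r = Suc r'" using assms by (cases r) auto
  define A B where "A = take k L" and "B = drop k L"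
  have L: "L = A @ B" and lA: "length A = k" and lB: "length B = r' * k"
    using True r by (simp_all add: A_def B_def)
  have "tpow k (r' + 1) f (B @ A) = tpow k r' f B * tpow k 1 f A"
    by (rule tpow_append) (use lA lB in auto)
  also have "\<dots> = tpow k (1 + r') f (A @ B)"
    by (subst tpow_append) (use lA lB in auto)
  finally show ?thesis using L r lA rotate_append[of A B] by simp
qed (simp add: tpow_def)

lemma tpow_nonzeroD:
  assumes "tpow k r f L \<noteq> 0" "\<And>M. f M \<noteq> 0 \<Longrightarrow> set M \<subseteq> X"
  shows "set L \<subseteq> X \<and> length L = r * k"
  using assms(1)
proof (induction r arbitrary: L)
  case (Suc r)
  have len: "length L = Suc r * k" using Suc.prems by (simp add: tpow_def split: if_splits)
  have "tpow k (1 + r) f (take k L @ drop k L) = tpow k 1 f (take k L) * tpow k r f (drop k L)"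
    by (rule tpow_append) (use len in auto)
  then have "f (take k L) \<noteq> 0" "tpow k r f (drop k L) \<noteq> 0"
    using Suc.prems len by auto
  then have "set (take k L) \<subseteq> X" "set (drop k L) \<subseteq> X" using assms(2) Suc.IH by auto
  then have "set L \<subseteq> X" by (metis append_take_drop_id set_append Un_subset_iff)
  then show ?case using len by simp
qed (simp add: tpow_def split: if_splits)

section \<open>Dwork's congruence\<close>

lemma fermat_int:
  fixes a :: int
  assumes "prime p"
  shows "int p dvd a ^ p - a"
proof -
  define b where "b = nat (a mod int p)"
  have p0: "p > 0" using assms prime_gt_0_nat by blast
  have ab: "[a = int b] (mod int p)" using p0 by (simp add: b_def cong_def)
  have "[b ^ p = b] (mod p)"
  proof (cases "p dvd b")
    case True
    then have "[b ^ p = 0 ^ p] (mod p)" "[b = 0] (mod p)"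
      by (simp_all add: cong_0_iff cong_pow)
    then show ?thesis using p0 by (metis cong_sym cong_trans zero_power)
  next
    case False
    then have "[b ^ (p - 1) * b = 1 * b] (mod p)"
      using fermat_theorem assms cong_scalar_right by blast
    then show ?thesis using p0 by (simp add: power_Suc2[symmetric])
  qed
  then have "[int b ^ p = int b] (mod int p)" by (metis cong_int_iff of_nat_power)
  then have "[a ^ p = a] (mod int p)" using ab by (meson cong_pow cong_sym cong_trans)
  then show ?thesis by (simp add: cong_iff_dvd_diff)
qed

lemma dvd_power_diff_lift:
  fixes x y :: int
  assumes "prime p" "0 < t" "int p ^ t dvd x - y"
  shows "int p ^ (t + 1) dvd x ^ p - y ^ p"
proof -
  have "[x = y] (mod int p)"
    using assms(2,3) by (meson cong_iff_dvd_diff cong_sym dvd_power dvd_trans cong_def)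
  then have "[(\<Sum>i<p. y ^ (p - Suc i) * x ^ i) = (\<Sum>i<p. y ^ (p - Suc i) * y ^ i)] (mod int p)"
    by (intro cong_sum cong_mult cong_pow) auto
  moreover have "(\<Sum>i<p. y ^ (p - Suc i) * y ^ i) = int p * y ^ (p - 1)"
    by (simp add: power_add[symmetric])
  ultimately have "int p dvd (\<Sum>i<p. y ^ (p - Suc i) * x ^ i)"
    by (metis cong_dvd_iff dvd_triv_left)
  then have "int p ^ t * int p dvd (x - y) * (\<Sum>i<p. y ^ (p - Suc i) * x ^ i)"
    using assms(3) by (rule mult_dvd_mono[rotated])
  then show ?thesis by (simp only: power_diff_sumr2[symmetric] power_Suc2 Suc_eq_plus1[symmetric])
qed

lemma dwork_congruence:
  fixes a :: int
  assumes "prime p"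
  shows "int p ^ (m + 1) dvd a ^ p ^ (m + 1) - a ^ p ^ m"
proof (induction m)
  case (Suc m)
  have "int p ^ (m + 1 + 1) dvd (a ^ p ^ (m + 1)) ^ p - (a ^ p ^ m) ^ p"
    by (rule dvd_power_diff_lift[OF assms _ Suc]) simp
  then show ?case by (simp add: power_mult[symmetric] mult.commute)
qed (use fermat_int[OF assms] in simp)

definition single_seq :: "nat \<Rightarrow> ('a list \<Rightarrow> int) \<Rightarrow> nat \<Rightarrow> 'a list \<Rightarrow> int" where
  "single_seq i f = (\<lambda>k. if k = i then f else (\<lambda>L. 0))"

lemma Vtau_eq_single_seq: "Vtau i x = single_seq i (\<lambda>L. if L = x then 1 else 0)"
  by (simp add: Vtau_def single_seq_def)

lemma witt_ghost_single_seq: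
  assumes "0 < p"
  shows "witt_ghost p n (single_seq i f) j L =
    (if j \<le> n \<and> i \<le> j then (\<Sum>s<p ^ i. tpow (p ^ i) (p ^ (j - i)) f (rotate s L)) else 0)"
proof -
  have "(\<Sum>i'\<le>j. \<Sum>s<p ^ i'. tpow (p ^ i') (p ^ (j - i')) (single_seq i f i') (rotate s L))
      = (\<Sum>i'\<le>j. if i' = i then (\<Sum>s<p ^ i. tpow (p ^ i) (p ^ (j - i)) f (rotate s L)) else 0)"
    by (rule sum.cong) (auto simp: single_seq_def tpow_zero_fun assms)
  then show ?thesis by (simp add: witt_ghost_def)
qed

lemma witt_ghost_decomp:
  assumes "0 < p"
  shows "witt_ghost p n m j L = (\<Sum>i\<le>n. witt_ghost p n (single_seq i (m i)) j L)"
proof (cases "j \<le> n")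
  case True
  have "(\<Sum>i\<le>n. witt_ghost p n (single_seq i (m i)) j L)
     = (\<Sum>i\<in>{..n} \<inter> {i. i \<le> j}. \<Sum>s<p ^ i. tpow (p ^ i) (p ^ (j - i)) (m i) (rotate s L))"
    using True by (simp add: witt_ghost_single_seq[OF assms] sum.inter_restrict)
  also have "{..n} \<inter> {i. i \<le> j} = {..j}" using True by auto
  finally show ?thesis using True by (simp add: witt_ghost_def)
qed (simp add: witt_ghost_single_seq[OF assms] witt_ghost_def)

lemma witt_ghost_Vtau:
  assumes "0 < p" "length x = p ^ i"
  shows "witt_ghost p n (Vtau i x) j L =
    (if j \<le> n \<and> i \<le> j then (\<Sum>s<p ^ i. if rotate s L = lpow (p ^ (j - i)) x then 1 else 0) else 0)"
  unfolding Vtau_eq_single_seq witt_ghost_single_seq[OF assms(1)]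
  using tpow_indicator[OF assms(2)] by simp

lemma witt_ghost_rotate:
  assumes "0 < p"
  shows "witt_ghost p n m j (rotate s L) = witt_ghost p n m j L"
proof -
  have "(\<Sum>t<p ^ i. tpow (p ^ i) (p ^ (j - i)) (m i) (rotate t (rotate s L)))
      = (\<Sum>t<p ^ i. tpow (p ^ i) (p ^ (j - i)) (m i) (rotate t L))" for i
  proof -
    define h where "h t = tpow (p ^ i) (p ^ (j - i)) (m i) (rotate t L)" for t
    have "h (t + p ^ i) = h t" for t
      using tpow_rotate[of "p ^ (j - i)" "p ^ i" "m i" "rotate t L"] assms
      by (simp add: h_def rotate_rotate add.commute)
    then show ?thesis using sum_periodic_shift[of h "p ^ i" s] by (simp add: h_def rotate_rotate)
  qed
  then show ?thesis by (simp add: witt_ghost_def)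
qed

lemma witt_ghost_single_seq_nonzeroD:
  assumes "0 < p" "\<And>M. f M \<noteq> 0 \<Longrightarrow> set M \<subseteq> Y"
    and "witt_ghost p n (single_seq i f) j L \<noteq> 0"
  shows "j \<le> n \<and> i \<le> j \<and> length L = p ^ j \<and> set L \<subseteq> Y"
proof -
  have ij: "j \<le> n \<and> i \<le> j"
    using assms(3) by (auto simp: witt_ghost_single_seq[OF assms(1)] split: if_splits)
  then obtain s where "tpow (p ^ i) (p ^ (j - i)) f (rotate s L) \<noteq> 0"
    using assms(3) sum.not_neutral_contains_not_neutral
    by (fastforce simp: witt_ghost_single_seq[OF assms(1)])
  then have "set (rotate s L) \<subseteq> Y \<and> length (rotate s L) = p ^ (j - i) * p ^ i"
    using tpow_nonzeroD assms(2) by blast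
  then show ?thesis using ij by (simp add: power_add[symmetric])
qed

section \<open>Dwork families\<close>

text \<open>The hypotheses of Dwork's lemma: they single out the image of the ghost map.\<close>

definition dwork_family :: "'a set \<Rightarrow> nat \<Rightarrow> nat \<Rightarrow> (nat \<Rightarrow> 'a list \<Rightarrow> int) \<Rightarrow> bool" where
  "dwork_family X p n g \<longleftrightarrow>
    (\<forall>j L. g j L \<noteq> 0 \<longrightarrow> j \<le> n \<and> length L = p ^ j \<and> set L \<subseteq> X) \<and>
    (\<forall>j. finite {L. g j L \<noteq> 0}) \<and>
    (\<forall>j s L. g j (rotate s L) = g j L) \<and>
    (\<forall>j u N. 0 < j \<and> j \<le> n \<and> u < j \<and> length N = p ^ u \<longrightarrow>
        int (p ^ (j - u)) dvd g j (lpow (p ^ (j - u)) N) - g (j - 1) (lpow (p ^ (j - 1 - u)) N))"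

lemma dwork_familyD:
  assumes "dwork_family X p n g"
  shows "g j L \<noteq> 0 \<Longrightarrow> j \<le> n \<and> length L = p ^ j \<and> set L \<subseteq> X"
    and "finite {L. g j L \<noteq> 0}"
    and "g j (rotate s L) = g j L"
    and "0 < j \<Longrightarrow> j \<le> n \<Longrightarrow> u < j \<Longrightarrow> length N = p ^ u \<Longrightarrow>
      int (p ^ (j - u)) dvd g j (lpow (p ^ (j - u)) N) - g (j - 1) (lpow (p ^ (j - 1 - u)) N)"
  using assms unfolding dwork_family_def by blast+

lemma dwork_familyI:
  assumes "\<And>j L. g j L \<noteq> 0 \<Longrightarrow> j \<le> n \<and> length L = p ^ j \<and> set L \<subseteq> X"
    and "\<And>j. finite {L. g j L \<noteq> 0}"
    and "\<And>j s L. g j (rotate s L) = g j L"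
    and "\<And>j u N. 0 < j \<Longrightarrow> j \<le> n \<Longrightarrow> u < j \<Longrightarrow> length N = p ^ u \<Longrightarrow>
      int (p ^ (j - u)) dvd g j (lpow (p ^ (j - u)) N) - g (j - 1) (lpow (p ^ (j - 1 - u)) N)"
  shows "dwork_family X p n g"
  using assms unfolding dwork_family_def by blast

lemma dwork_family_zero: "dwork_family X p n (\<lambda>j L. 0)"
  by (simp add: dwork_family_def)

lemma dwork_family_axpy:
  assumes g: "dwork_family X p n g" and h: "dwork_family X p n h"
  shows "dwork_family X p n (\<lambda>j L. a * g j L + h j L)"
proof (rule dwork_familyI)
  fix j L assume "a * g j L + h j L \<noteq> 0"
  then have "g j L \<noteq> 0 \<or> h j L \<noteq> 0" by auto
  then show "j \<le> n \<and> length L = p ^ j \<and> set L \<subseteq> X"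
    using dwork_familyD(1)[OF g] dwork_familyD(1)[OF h] by blast
next
  fix j
  have "{L. a * g j L + h j L \<noteq> 0} \<subseteq> {L. g j L \<noteq> 0} \<union> {L. h j L \<noteq> 0}" by auto
  then show "finite {L. a * g j L + h j L \<noteq> 0}"
    using dwork_familyD(2)[OF g] dwork_familyD(2)[OF h] by (meson finite_Un finite_subset)
next
  fix j s L show "a * g j (rotate s L) + h j (rotate s L) = a * g j L + h j L"
    using dwork_familyD(3)[OF g] dwork_familyD(3)[OF h] by simp
next
  fix j u and N :: "'a list"
  assume "0 < j" "j \<le> n" "u < j" "length N = p ^ u"
  then have "int (p ^ (j - u)) dvd
      a * (g j (lpow (p ^ (j - u)) N) - g (j - 1) (lpow (p ^ (j - 1 - u)) N)) +
      (h j (lpow (p ^ (j - u)) N) - h (j - 1) (lpow (p ^ (j - 1 - u)) N))"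
    using dwork_familyD(4)[OF g] dwork_familyD(4)[OF h] by (simp add: dvd_add dvd_mult)
  then show "int (p ^ (j - u)) dvd (a * g j (lpow (p ^ (j - u)) N) + h j (lpow (p ^ (j - u)) N)) -
      (a * g (j - 1) (lpow (p ^ (j - 1 - u)) N) + h (j - 1) (lpow (p ^ (j - 1 - u)) N))"
    by (simp add: algebra_simps)
qed

lemma dwork_family_diff:
  "dwork_family X p n g \<Longrightarrow> dwork_family X p n h \<Longrightarrow> dwork_family X p n (\<lambda>j L. g j L - h j L)"
  using dwork_family_axpy[of X p n h g "-1"] by simp

lemma dwork_family_sum:
  assumes "finite I" "\<And>i. i \<in> I \<Longrightarrow> dwork_family X p n (h i)"
  shows "dwork_family X p n (\<lambda>j L. \<Sum>i\<in>I. c i * h i j L)"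
  using assms
proof (induction I rule: finite_induct)
  case (insert x F)
  then show ?case using dwork_family_axpy[of X p n "h x" "\<lambda>j L. \<Sum>i\<in>F. c i * h i j L"] by simp
qed (simp add: dwork_family_zero)

lemma transfer_tpow_congruence:
  assumes p: "prime p" and ij: "i < j" and uj: "u < j" and N: "length N = p ^ u"
  shows "int (p ^ (j - u)) dvd
    (\<Sum>s<p ^ i. tpow (p ^ i) (p ^ (j - i)) f (rotate s (lpow (p ^ (j - u)) N))
               - tpow (p ^ i) (p ^ (j - 1 - i)) f (rotate s (lpow (p ^ (j - 1 - u)) N)))"
    (is "_ dvd (\<Sum>s<p ^ i. ?D s)")
proof (cases "u \<le> i")
  case True
  \<comment> \<open>the orbit sum has period \<open>p ^ u\<close>; each summand is a Dwork difference of level \<open>j - i\<close>\<close>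
  define a where "a s = f (lpow (p ^ (i - u)) (rotate s N))" for s
  have la: "length (lpow (p ^ (i - u)) (rotate s N)) = p ^ i" for s
    using N True by (simp add: power_add[symmetric])
  have "p ^ (j - u) = p ^ (j - i) * p ^ (i - u)" "p ^ (j - 1 - u) = p ^ (j - 1 - i) * p ^ (i - u)"
    using True ij by (simp_all add: power_add[symmetric])
  then have Da: "?D s = a s ^ p ^ (j - 1 - i + 1) - a s ^ p ^ (j - 1 - i)" for s
    using tpow_lpow_single[OF la] ij
    by (simp add: rotate_lpow lpow_lpow[symmetric] a_def Suc_diff_Suc)
  have per: "?D (s + p ^ u) = ?D s" for s
    unfolding Da a_def using N by (simp add: rotate_rotate[symmetric])
  have pi: "p ^ (i - u) * p ^ u = p ^ i" using True by (simp add: power_add[symmetric])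
  have sum_eq: "(\<Sum>s<p ^ i. ?D s) = int (p ^ (i - u)) * (\<Sum>s<p ^ u. ?D s)"
    using sum_periodic_mult[of ?D "p ^ u" "p ^ (i - u)", OF per] unfolding pi .
  have "int p ^ (j - 1 - i + 1) dvd (\<Sum>s<p ^ u. ?D s)"
    unfolding Da by (intro dvd_sum) (rule dwork_congruence[OF p])
  then have "int p ^ (i - u) * int p ^ (j - 1 - i + 1) dvd int p ^ (i - u) * (\<Sum>s<p ^ u. ?D s)"
    by (rule mult_dvd_mono[OF dvd_refl])
  moreover have "i - u + (j - 1 - i + 1) = j - u" using True ij by simp
  ultimately have "int p ^ (j - u) dvd int p ^ (i - u) * (\<Sum>s<p ^ u. ?D s)"
    by (simp only: power_add[symmetric])
  then show ?thesis by (simp only: sum_eq of_nat_power)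
next
  case False
  \<comment> \<open>each summand is a Dwork difference of level \<open>j - u\<close>\<close>
  define Q where "Q s = tpow (p ^ i) (p ^ (u - i)) f (rotate s N)" for s
  have lN: "length (rotate s N) = p ^ i * p ^ (u - i)" for s
    using N False by (simp add: power_add[symmetric])
  have "p ^ (j - i) = p ^ (u - i) * p ^ (j - u)" "p ^ (j - 1 - i) = p ^ (u - i) * p ^ (j - 1 - u)"
    using False uj by (simp_all add: power_add[symmetric])
  then have "?D s = Q s ^ p ^ (j - 1 - u + 1) - Q s ^ p ^ (j - 1 - u)" for s
    using tpow_lpow[OF lN] uj by (simp add: rotate_lpow Q_def Suc_diff_Suc)
  moreover have "j - 1 - u + 1 = j - u" using uj by simp
  ultimately have "int p ^ (j - u) dvd ?D s" for s
    using dwork_congruence[OF p] by metis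
  then show ?thesis by (simp only: of_nat_power dvd_sum)
qed

lemma witt_ghost_single_seq_congruence:
  assumes p: "prime p" and j: "0 < j" "j \<le> n" and uj: "u < j" and N: "length N = p ^ u"
  shows "int (p ^ (j - u)) dvd witt_ghost p n (single_seq i f) j (lpow (p ^ (j - u)) N)
    - witt_ghost p n (single_seq i f) (j - 1) (lpow (p ^ (j - 1 - u)) N)"
proof -
  have p0: "0 < p" using p prime_gt_0_nat by blast
  define G A where "G = witt_ghost p n (single_seq i f)" and "A = lpow (p ^ (j - u)) N"
  consider "j < i" | "j = i" | "i < j" by linarith
  then have "int (p ^ (j - u)) dvd G j A - G (j - 1) (lpow (p ^ (j - 1 - u)) N)"
  proof cases
    case 1
    then have "\<not> i \<le> j" "\<not> i \<le> j - 1" by auto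
    then show ?thesis by (simp add: G_def witt_ghost_single_seq[OF p0])
  next
    case 2
    define h where "h s = tpow (p ^ j) (p ^ (j - j)) f (rotate s A)" for s
    have "h (s + p ^ u) = h s" for s
      unfolding h_def A_def using N by (simp add: rotate_rotate[symmetric] rotate_lpow)
    then have "(\<Sum>s<p ^ (j - u) * p ^ u. h s) = int (p ^ (j - u)) * (\<Sum>s<p ^ u. h s)"
      by (rule sum_periodic_mult)
    moreover have "p ^ (j - u) * p ^ u = p ^ j" using uj by (simp add: power_add[symmetric])
    ultimately have "int (p ^ (j - u)) dvd G j A"
      using 2 j by (simp add: G_def witt_ghost_single_seq[OF p0] h_def)
    moreover have "\<not> i \<le> j - 1" using 2 j by simp
    then have "G (j - 1) (lpow (p ^ (j - 1 - u)) N) = 0" by (simp add: G_def witt_ghost_single_seq[OF p0])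
    ultimately show ?thesis by simp
  next
    case 3
    then have "j - 1 \<le> n" "i \<le> j - 1" using j by auto
    then show ?thesis
      using transfer_tpow_congruence[OF p 3 uj N, of f] j 3
      by (simp add: G_def A_def witt_ghost_single_seq[OF p0] sum_subtractf)
  qed
  then show ?thesis by (simp only: G_def A_def)
qed

lemma dwork_family_ghost_single_seq:
  assumes p: "prime p" and f: "f \<in> tensor_pow_grp X (p ^ i)"
  shows "dwork_family X p n (witt_ghost p n (single_seq i f))"
    (is "dwork_family X p n ?G")
proof (rule dwork_familyI)
  have p0: "0 < p" using p prime_gt_0_nat by blast
  have fX: "f M \<noteq> 0 \<Longrightarrow> set M \<subseteq> X" for M using f by (simp add: tensor_pow_grp_def)
  show "?G j L \<noteq> 0 \<Longrightarrow> j \<le> n \<and> length L = p ^ j \<and> set L \<subseteq> X" for j L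
    using witt_ghost_single_seq_nonzeroD[OF p0 fX] by blast
  show "finite {L. ?G j L \<noteq> 0}" for j
  proof -
    define Y where "Y = \<Union> (set ` {M. f M \<noteq> 0})"
    have "finite Y" using f by (simp add: Y_def tensor_pow_grp_def)
    moreover have "f M \<noteq> 0 \<Longrightarrow> set M \<subseteq> Y" for M by (auto simp: Y_def)
    then have "{L. ?G j L \<noteq> 0} \<subseteq> {L. set L \<subseteq> Y \<and> length L = p ^ j}"
      using witt_ghost_single_seq_nonzeroD[OF p0] by blast
    ultimately show ?thesis using finite_lists_length_eq finite_subset by blast
  qed
  show "?G j (rotate s L) = ?G j L" for j s L
    by (rule witt_ghost_rotate[OF p0])
qed (rule witt_ghost_single_seq_congruence[OF p])

lemma dwork_family_witt_ghost:
  assumes p: "prime p" and m: "m \<in> witt_seqs X p n"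
  shows "dwork_family X p n (witt_ghost p n m)"
proof -
  have "dwork_family X p n (\<lambda>j L. \<Sum>i\<le>n. 1 * witt_ghost p n (single_seq i (m i)) j L)"
    using m by (intro dwork_family_sum dwork_family_ghost_single_seq[OF p])
      (auto simp: witt_seqs_def)
  moreover have "witt_ghost p n m = (\<lambda>j L. \<Sum>i\<le>n. witt_ghost p n (single_seq i (m i)) j L)"
    using p prime_gt_0_nat witt_ghost_decomp by blast
  ultimately show ?thesis by simp
qed

lemma orbit_repsD:
  "orbit_reps X p n R \<Longrightarrow> j \<le> n \<Longrightarrow> r \<in> R j \<Longrightarrow> length r = p ^ j \<and> set r \<subseteq> X"
  unfolding orbit_reps_def by blast

lemma orbit_reps_cover:
  "orbit_reps X p n R \<Longrightarrow> j \<le> n \<Longrightarrow> length L = p ^ j \<Longrightarrow> set L \<subseteq> X \<Longrightarrow>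
    \<exists>r\<in>R j. \<exists>t. L = rotate t r"
  unfolding orbit_reps_def by blast

lemma orbit_reps_rotate_eq:
  assumes R: "orbit_reps X p n R" and j: "j \<le> n" and r: "r \<in> R j" and r': "rotate s r \<in> R j"
  shows "rotate s r = r"
proof -
  have "length (rotate s r) = p ^ j \<and> set (rotate s r) \<subseteq> X" using orbit_repsD[OF R j r] by simp
  then have "\<exists>!r0\<in>R j. \<exists>t. rotate s r = rotate t r0" using R j unfolding orbit_reps_def by blast
  moreover have "rotate s r = rotate 0 (rotate s r)" by simp
  ultimately show ?thesis using r r' by blast
qed

lemma orbit_sum_reps:
  assumes R: "orbit_reps X p n R" and j: "j \<le> n" and r: "r \<in> R j"
    and f: "\<And>L. f L \<noteq> 0 \<Longrightarrow> L \<in> R j"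
  shows "(\<Sum>s<p ^ j. f (rotate s (rotate t r))) = f r * stab_count (p ^ j) r"
proof -
  have len: "length r = p ^ j" using orbit_repsD[OF R j r] by simp
  have "(\<Sum>s<p ^ j. f (rotate s (rotate t r))) = (\<Sum>s<p ^ j. f (rotate s r))"
    using sum_periodic_shift[of "\<lambda>s. f (rotate s r)" "p ^ j" t] len
    by (simp add: rotate_rotate[symmetric])
  also have "\<dots> = (\<Sum>s<p ^ j. f r * (if rotate s r = r then 1 else 0))"
  proof (rule sum.cong[OF refl])
    fix s show "f (rotate s r) = f r * (if rotate s r = r then 1 else 0)"
      using f[of "rotate s r"] orbit_reps_rotate_eq[OF R j r, of s] by (cases "rotate s r = r") auto
  qed
  finally show ?thesis by (simp add: stab_count_def sum_distrib_left)
qed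

lemma dwork_family_stab_count_dvd:
  assumes p: "prime p" and g: "dwork_family X p n g" and j: "j \<le> n"
    and low: "\<And>k L. k < j \<Longrightarrow> g k L = 0" and len: "length r = p ^ j"
  shows "stab_count (p ^ j) r dvd g j r"
proof -
  obtain u where u: "u \<le> j" "stab_count (p ^ j) r = int (p ^ (j - u))"
    and r_eq: "r = lpow (p ^ (j - u)) (take (p ^ u) r)"
    using stab_count_prime_power[OF p len] by blast
  show ?thesis
  proof (cases "u = j")
    case False
    define N where "N = take (p ^ u) r"
    have "p ^ u \<le> p ^ j" using power_increasing[OF u(1)] prime_ge_1_nat[OF p] by blast
    then have "length N = p ^ u" using len by (simp add: N_def)
    then have "int (p ^ (j - u)) dvd g j (lpow (p ^ (j - u)) N) - g (j - 1) (lpow (p ^ (j - 1 - u)) N)"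
      using dwork_familyD(4)[OF g _ j] False u by simp
    then show ?thesis using low u False r_eq by (simp add: N_def[symmetric])
  qed (use u in simp)
qed

lemma dwork_family_lowest_level:
  assumes p: "prime p" and R: "orbit_reps X p n R" and g: "dwork_family X p n g"
    and j: "j \<le> n" and low: "\<And>k L. k < j \<Longrightarrow> g k L = 0"
  obtains f where "f \<in> tensor_pow_grp X (p ^ j)" "\<And>L. f L \<noteq> 0 \<Longrightarrow> L \<in> R j"
    "\<And>L. g j L = (\<Sum>s<p ^ j. f (rotate s L))"
proof
  define f where "f L = (if L \<in> R j then g j L div stab_count (p ^ j) L else 0)" for L
  show fR: "f L \<noteq> 0 \<Longrightarrow> L \<in> R j" for L by (auto simp: f_def split: if_splits)
  have "{L. f L \<noteq> 0} \<subseteq> {L. g j L \<noteq> 0}" by (auto simp: f_def)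
  then show "f \<in> tensor_pow_grp X (p ^ j)"
    unfolding tensor_pow_grp_def
    using dwork_familyD(2)[OF g] fR orbit_repsD[OF R j] finite_subset by blast
  have dvd: "stab_count (p ^ j) r dvd g j r" if "r \<in> R j" for r
    using dwork_family_stab_count_dvd[OF p g j low] orbit_repsD[OF R j that] by blast
  show "g j L = (\<Sum>s<p ^ j. f (rotate s L))" for L
  proof (cases "length L = p ^ j \<and> set L \<subseteq> X")
    case True
    then obtain r t where r: "r \<in> R j" and L: "L = rotate t r"
      using orbit_reps_cover[OF R j] by blast
    have "(\<Sum>s<p ^ j. f (rotate s L)) = f r * stab_count (p ^ j) r"
      unfolding L by (rule orbit_sum_reps[OF R j r fR])
    also have "\<dots> = g j r" using dvd[OF r] r by (simp add: f_def)
    finally show ?thesis using dwork_familyD(3)[OF g] L by simp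
  next
    case False
    then have "g j L = 0" using dwork_familyD(1)[OF g] by blast
    moreover have "f (rotate s L) = 0" for s
      using fR orbit_repsD[OF R j] False by (metis length_rotate set_rotate)
    ultimately show ?thesis by simp
  qed
qed

lemma dwork_family_induct:
  assumes p: "prime p" and R: "orbit_reps X p n R"
    and g: "dwork_family X p n g" and low: "\<And>k L. k < j \<Longrightarrow> g k L = 0" and j: "j \<le> Suc n"
    and zero: "P (Suc n) (\<lambda>k L. 0)"
    and peel: "\<And>j g f. j \<le> n \<Longrightarrow> dwork_family X p n g \<Longrightarrow> (\<And>k L. k < j \<Longrightarrow> g k L = 0) \<Longrightarrow>
      f \<in> tensor_pow_grp X (p ^ j) \<Longrightarrow> (\<And>L. f L \<noteq> 0 \<Longrightarrow> L \<in> R j) \<Longrightarrow>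
      (\<And>L. g j L = (\<Sum>s<p ^ j. f (rotate s L))) \<Longrightarrow>
      (\<And>g'. dwork_family X p n g' \<Longrightarrow> (\<And>k L. k \<le> j \<Longrightarrow> g' k L = 0) \<Longrightarrow> P (Suc j) g') \<Longrightarrow>
      P j g"
  shows "P j g"
  using j g low
proof (induction j arbitrary: g rule: inc_induct)
  case base
  have "g = (\<lambda>k L. 0)"
    using base.prems dwork_familyD(1)[OF base.prems(1)] by (fastforce simp: fun_eq_iff)
  then show ?case using zero by simp
next
  case (step j)
  have jn: "j \<le> n" using step.hyps by simp
  obtain f where "f \<in> tensor_pow_grp X (p ^ j)" "\<And>L. f L \<noteq> 0 \<Longrightarrow> L \<in> R j"
    "\<And>L. g j L = (\<Sum>s<p ^ j. f (rotate s L))"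
    using dwork_family_lowest_level[OF p R step.prems(1) jn step.prems(2)] by blast
  with step show ?case by (intro peel[of j g f]) auto
qed

section \<open>The basis theorem\<close>

lemma coeffs_axpy:
  assumes "c1 \<in> coeffs n R" "c2 \<in> coeffs n R"
  shows "(\<lambda>k. a * c1 k + c2 k) \<in> coeffs n R"
proof -
  have "{k. a * c1 k + c2 k \<noteq> 0} \<subseteq> {k. c1 k \<noteq> 0} \<union> {k. c2 k \<noteq> 0}" by auto
  then show ?thesis using assms unfolding coeffs_def by (auto intro: finite_subset)
qed

lemma lincomb_eq_sum:
  assumes "finite K" "{k. c k \<noteq> 0} \<subseteq> K"
  shows "lincomb p n c j L = (\<Sum>k\<in>K. c k * witt_ghost p n (Vtau (fst k) (snd k)) j L)"
  unfolding lincomb_def by (rule sum.mono_neutral_left) (use assms in auto)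

lemma lincomb_axpy:
  assumes "c1 \<in> coeffs n R" "c2 \<in> coeffs n R"
  shows "lincomb p n (\<lambda>k. a * c1 k + c2 k) j L = a * lincomb p n c1 j L + lincomb p n c2 j L"
proof -
  define K where "K = {k. c1 k \<noteq> 0} \<union> {k. c2 k \<noteq> 0}"
  have K: "finite K" using assms by (simp add: K_def coeffs_def)
  have "{k. a * c1 k + c2 k \<noteq> 0} \<subseteq> K" by (auto simp: K_def)
  then show ?thesis
    using lincomb_eq_sum[OF K, of c1] lincomb_eq_sum[OF K, of c2] lincomb_eq_sum[OF K]
    by (simp add: K_def algebra_simps sum.distrib sum_distrib_left)
qed

lemma dwork_family_lincomb:
  assumes p: "prime p" and R: "orbit_reps X p n R" and c: "c \<in> coeffs n R"
  shows "dwork_family X p n (lincomb p n c)"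
proof -
  have "dwork_family X p n (witt_ghost p n (Vtau i r))" if "c (i, r) \<noteq> 0" for i r
  proof -
    have "i \<le> n" "r \<in> R i" using c that by (auto simp: coeffs_def)
    then have "(\<lambda>L. if L = r then 1 else 0) \<in> tensor_pow_grp X (p ^ i)"
      using orbit_repsD[OF R] by (auto simp: tensor_pow_grp_def)
    then show ?thesis
      unfolding Vtau_eq_single_seq by (rule dwork_family_ghost_single_seq[OF p])
  qed
  then show ?thesis
    unfolding lincomb_def using c by (intro dwork_family_sum) (auto simp: coeffs_def)
qed

lemma lincomb_single_level:
  assumes p0: "0 < p" and j: "j \<le> n"
    and f: "f \<in> tensor_pow_grp X (p ^ j)" and fR: "\<And>L. f L \<noteq> 0 \<Longrightarrow> L \<in> R j"
  defines "c \<equiv> \<lambda>k. if fst k = j then f (snd k) else 0"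
  shows "c \<in> coeffs n R" and "\<And>k L. k < j \<Longrightarrow> lincomb p n c k L = 0"
    and "\<And>L. lincomb p n c j L = (\<Sum>s<p ^ j. f (rotate s L))"
proof -
  define S where "S = {L. f L \<noteq> 0}"
  have S: "finite S" "\<And>r. r \<in> S \<Longrightarrow> length r = p ^ j"
    using f by (auto simp: S_def tensor_pow_grp_def)
  have supp: "{k. c k \<noteq> 0} = Pair j ` S" by (auto simp: c_def S_def)
  show "c \<in> coeffs n R" unfolding coeffs_def using supp S fR j by (auto simp: c_def)
  have lc: "lincomb p n c k L = (\<Sum>r\<in>S. f r * witt_ghost p n (Vtau j r) k L)" for k L
    unfolding lincomb_def supp by (subst sum.reindex) (auto simp: inj_on_def c_def)
  show "lincomb p n c k L = 0" if "k < j" for k L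
    unfolding lc using that S(2) by (simp add: witt_ghost_Vtau[OF p0])
  show "lincomb p n c j L = (\<Sum>s<p ^ j. f (rotate s L))" for L
  proof -
    have "lincomb p n c j L = (\<Sum>r\<in>S. \<Sum>s<p ^ j. if r = rotate s L then f r else 0)"
      unfolding lc using S(2) j
      by (intro sum.cong) (auto simp: witt_ghost_Vtau[OF p0] sum_distrib_left intro!: sum.cong)
    also have "\<dots> = (\<Sum>s<p ^ j. \<Sum>r\<in>S. if r = rotate s L then f r else 0)"
      by (rule sum.swap)
    also have "\<dots> = (\<Sum>s<p ^ j. f (rotate s L))"
      using S(1) by (intro sum.cong) (auto simp: S_def)
    finally show ?thesis .
  qed
qed

lemma dwork_family_eq_lincomb:
  assumes p: "prime p" and R: "orbit_reps X p n R" and g: "dwork_family X p n g"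
  shows "\<exists>c\<in>coeffs n R. lincomb p n c = g"
proof (rule dwork_family_induct[OF p R g _ le0, where P = "\<lambda>_ g. \<exists>c\<in>coeffs n R. lincomb p n c = g"])
  have "(\<lambda>k. 0) \<in> coeffs n R" by (simp add: coeffs_def)
  then show "\<exists>c\<in>coeffs n R. lincomb p n c = (\<lambda>k L. 0)" by (force simp: lincomb_def)
next
  fix j g f
  assume j: "j \<le> n" and g: "dwork_family X p n g" and low: "\<And>k L. k < j \<Longrightarrow> g k L = 0"
    and f: "f \<in> tensor_pow_grp X (p ^ j)" "\<And>L. f L \<noteq> 0 \<Longrightarrow> L \<in> R j"
    and gj: "\<And>L. g j L = (\<Sum>s<p ^ j. f (rotate s L))"
    and IH: "\<And>g'. dwork_family X p n g' \<Longrightarrow> (\<And>k L. k \<le> j \<Longrightarrow> g' k L = 0) \<Longrightarrow>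
      \<exists>c\<in>coeffs n R. lincomb p n c = g'"
  have p0: "0 < p" using p prime_gt_0_nat by blast
  define cj where "cj = (\<lambda>k. if fst k = j then f (snd k) else 0)"
  note cj = lincomb_single_level[OF p0 j f(1), of R, OF f(2), folded cj_def]
  have "dwork_family X p n (\<lambda>k L. g k L - lincomb p n cj k L)"
    by (rule dwork_family_diff[OF g dwork_family_lincomb[OF p R cj(1)]])
  moreover have "g k L - lincomb p n cj k L = 0" if "k \<le> j" for k L
    using that low gj cj(2,3) by (cases "k = j") auto
  ultimately obtain c' where c': "c' \<in> coeffs n R" "lincomb p n c' = (\<lambda>k L. g k L - lincomb p n cj k L)"
    using IH by blast
  have "lincomb p n (\<lambda>k. 1 * c' k + cj k) = g"
    using lincomb_axpy[OF c'(1) cj(1), of p 1] c'(2) by (simp add: fun_eq_iff)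
  then show "\<exists>c\<in>coeffs n R. lincomb p n c = g" using coeffs_axpy[OF c'(1) cj(1)] by blast
qed simp

lemma witt_ghost_single_seq_upto:
  assumes p0: "0 < p" and j: "j \<le> n" and f: "f \<in> tensor_pow_grp X (p ^ j)" and k: "k \<le> j"
  shows "witt_ghost p n (single_seq j f) k L = (if k = j then (\<Sum>s<p ^ j. f (rotate s L)) else 0)"
  using j k f
  by (auto simp: witt_ghost_single_seq[OF p0] tensor_pow_grp_def intro!: sum.cong)
    (metis length_rotate)

lemma witt_ghost_zero: "0 < p \<Longrightarrow> witt_ghost p n (\<lambda>k L. 0) = (\<lambda>k L. 0)"
  by (simp add: fun_eq_iff witt_ghost_def tpow_zero_fun)

lemma witt_ghost_fun_upd:
  assumes p0: "0 < p" and j: "j \<le> n" and mj: "m j = (\<lambda>L. 0)"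
  shows "witt_ghost p n (m(j := f)) k L = witt_ghost p n (single_seq j f) k L + witt_ghost p n m k L"
proof -
  have split: "witt_ghost p n m' k L = witt_ghost p n (single_seq j (m' j)) k L
      + (\<Sum>i\<in>{..n} - {j}. witt_ghost p n (single_seq i (m' i)) k L)" for m'
    unfolding witt_ghost_decomp[OF p0, of n m'] by (rule sum.remove) (use j in auto)
  have "witt_ghost p n (single_seq j (m j)) k L = 0"
    using mj p0 by (simp add: witt_ghost_single_seq[OF p0] tpow_zero_fun)
  then show ?thesis using split[of "m(j := f)"] split[of m] by simp
qed

lemma dwork_family_in_witt_W:
  assumes p: "prime p" and R: "orbit_reps X p n R" and g: "dwork_family X p n g"
  shows "g \<in> witt_W X p n"
proof -
  have p0: "0 < p" using p prime_gt_0_nat by blast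
  have "\<exists>m\<in>witt_seqs X p n. (\<forall>k<0. m k = (\<lambda>L. 0)) \<and> witt_ghost p n m = g"
  proof (rule dwork_family_induct[OF p R g _ le0,
        where P = "\<lambda>j g. \<exists>m\<in>witt_seqs X p n. (\<forall>k<j. m k = (\<lambda>L. 0)) \<and> witt_ghost p n m = g"])
    have "(\<lambda>k L. 0) \<in> witt_seqs X p n" by (simp add: witt_seqs_def tensor_pow_grp_def)
    then show "\<exists>m\<in>witt_seqs X p n. (\<forall>k<Suc n. m k = (\<lambda>L. 0)) \<and> witt_ghost p n m = (\<lambda>k L. 0)"
      using witt_ghost_zero[OF p0] by (intro bexI[of _ "\<lambda>k L. 0"]) auto
  next
    fix j g f
    assume j: "j \<le> n" and g: "dwork_family X p n g" and low: "\<And>k L. k < j \<Longrightarrow> g k L = 0"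
      and f: "f \<in> tensor_pow_grp X (p ^ j)"
      and gj: "\<And>L. g j L = (\<Sum>s<p ^ j. f (rotate s L))"
      and IH: "\<And>g'. dwork_family X p n g' \<Longrightarrow> (\<And>k L. k \<le> j \<Longrightarrow> g' k L = 0) \<Longrightarrow>
        \<exists>m\<in>witt_seqs X p n. (\<forall>k<Suc j. m k = (\<lambda>L. 0)) \<and> witt_ghost p n m = g'"
    define G where "G = witt_ghost p n (single_seq j f)"
    have "dwork_family X p n (\<lambda>k L. g k L - G k L)"
      unfolding G_def by (rule dwork_family_diff[OF g dwork_family_ghost_single_seq[OF p f]])
    moreover have "g k L - G k L = 0" if "k \<le> j" for k L
      using that low gj witt_ghost_single_seq_upto[OF p0 j f] by (auto simp: G_def)
    ultimately obtain m' where m': "m' \<in> witt_seqs X p n" "\<forall>k<Suc j. m' k = (\<lambda>L. 0)"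
      "witt_ghost p n m' = (\<lambda>k L. g k L - G k L)"
      using IH by blast
    have "m'(j := f) \<in> witt_seqs X p n" using m'(1) f j by (auto simp: witt_seqs_def)
    moreover have "witt_ghost p n (m'(j := f)) = g"
      using witt_ghost_fun_upd[OF p0 j, of m'] m'(2,3) by (simp add: G_def fun_eq_iff)
    ultimately show "\<exists>m\<in>witt_seqs X p n. (\<forall>k<j. m k = (\<lambda>L. 0)) \<and> witt_ghost p n m = g"
      using m'(2) by (intro bexI[of _ "m'(j := f)"]) auto
  qed simp
  then show ?thesis unfolding witt_W_def by blast
qed

lemma lincomb_at_orbit_rep:
  assumes p0: "0 < p" and R: "orbit_reps X p n R" and c: "c \<in> coeffs n R"
    and i: "i \<le> n" and r: "r \<in> R i" and low: "\<And>k r'. k < i \<Longrightarrow> c (k, r') = 0"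
  shows "lincomb p n c i r = c (i, r) * stab_count (p ^ i) r"
proof -
  have "c k * witt_ghost p n (Vtau (fst k) (snd k)) i r
      = (if k = (i, r) then c (i, r) * stab_count (p ^ i) r else 0)" if "c k \<noteq> 0" for k
  proof -
    obtain i' r' where k: "k = (i', r')" by (cases k)
    then have i': "i' \<le> n" "r' \<in> R i'" using c that by (auto simp: coeffs_def)
    then have len: "length r' = p ^ i'" using orbit_repsD[OF R] by blast
    consider "i' < i" | "i < i'" | "i' = i" by linarith
    then show ?thesis
    proof cases
      case 1 then show ?thesis using low that k by simp
    next
      case 2 then show ?thesis using k by (simp add: witt_ghost_Vtau[OF p0 len])
    next
      case 3
      \<comment> \<open>\<open>r\<close> and \<open>r'\<close> are representatives of the same level, so they lie in one orbit only if equal\<close>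
      have "rotate s r = r' \<longleftrightarrow> r' = r \<and> rotate s r = r" for s
        using orbit_reps_rotate_eq[OF R i r, of s] i' 3 by auto
      moreover have "length r' = p ^ i" using len 3 by simp
      ultimately show ?thesis using k 3 i by (simp add: witt_ghost_Vtau[OF p0] stab_count_def)
    qed
  qed
  then have "lincomb p n c i r
      = (\<Sum>k\<in>{k. c k \<noteq> 0}. if k = (i, r) then c (i, r) * stab_count (p ^ i) r else 0)"
    unfolding lincomb_def by (rule sum.cong[OF refl]) simp
  then show ?thesis using c by (simp add: coeffs_def)
qed

lemma inj_on_lincomb:
  assumes p: "prime p" and R: "orbit_reps X p n R"
  shows "inj_on (lincomb p n) (coeffs n R)"
proof (rule inj_onI)
  fix c1 c2 assume c1: "c1 \<in> coeffs n R" and c2: "c2 \<in> coeffs n R"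
    and eq: "lincomb p n c1 = lincomb p n c2"
  define d where "d k = - 1 * c2 k + c1 k" for k
  have d: "d \<in> coeffs n R" unfolding d_def by (rule coeffs_axpy[OF c2 c1])
  have d0: "lincomb p n d i r = 0" for i r
    unfolding d_def lincomb_axpy[OF c2 c1] eq by simp
  have "\<forall>r. d (i, r) = 0" for i
  proof (induction i rule: less_induct)
    case (less i)
    show ?case
    proof
      fix r
      show "d (i, r) = 0"
      proof (cases "i \<le> n \<and> r \<in> R i")
        case True
        then have "d (i, r) * stab_count (p ^ i) r = 0"
          using lincomb_at_orbit_rep[OF prime_gt_0_nat[OF p] R d, of i r] less.IH d0 by auto
        moreover have "stab_count (p ^ i) r \<noteq> 0"
          using stab_count_nonzero[OF p] orbit_repsD[OF R] True by blast
        ultimately show ?thesis by simp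
      qed (use d in \<open>auto simp: coeffs_def\<close>)
    qed
  qed
  then show "c1 = c2" by (auto simp: fun_eq_iff d_def)
qed

theorem bij_betw_lincomb_witt_W:
  assumes p: "prime p" and R: "orbit_reps X p n R"
  shows "bij_betw (lincomb p n) (coeffs n R) (witt_W X p n)"
  unfolding bij_betw_def
proof
  show "inj_on (lincomb p n) (coeffs n R)" by (rule inj_on_lincomb[OF p R])
  show "lincomb p n ` coeffs n R = witt_W X p n"
  proof
    show "lincomb p n ` coeffs n R \<subseteq> witt_W X p n"
      using dwork_family_in_witt_W[OF p R] dwork_family_lincomb[OF p R] by (simp add: image_subset_iff)
    show "witt_W X p n \<subseteq> lincomb p n ` coeffs n R"
    proof
      fix w assume "w \<in> witt_W X p n"
      then obtain m where "m \<in> witt_seqs X p n" "w = witt_ghost p n m" by (auto simp: witt_W_def)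
      then have "dwork_family X p n w" using dwork_family_witt_ghost[OF p] by simp
      then show "w \<in> lincomb p n ` coeffs n R" using dwork_family_eq_lincomb[OF p R] by force
    qed
  qed
qed

section \<open>Products of basis elements\<close>

lemma rotate_eq_zip_indicator:
  assumes "length P = length Q"
  shows "(if rotate t L = zip P Q then 1 else (0::int)) =
    (if rotate t (map fst L) = P then 1 else 0) * (if rotate t (map snd L) = Q then 1 else 0)"
  using assms by (auto simp: rotate_map zip_map_fst_snd)

lemma orbit_count_rotate:
  assumes p0: "0 < p" and x: "length x = p ^ i" and ik: "i \<le> k"
  shows "(\<Sum>s<p ^ i. if rotate t A = rotate s (lpow (p ^ (k - i)) x) then 1 else (0::int))
       = (\<Sum>s<p ^ i. if rotate s A = lpow (p ^ (k - i)) x then 1 else 0)"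
proof (cases "length A = p ^ k")
  case True
  define X' where "X' = lpow (p ^ (k - i)) x"
  have lX: "length X' = p ^ k" using x ik by (simp add: X'_def power_add[symmetric])
  have pX: "rotate (p ^ i) X' = X'" using x by (simp add: X'_def rotate_lpow)
  have pik: "p ^ i \<le> p ^ k" using ik p0 by (simp add: power_increasing)
  define h where "h u = (if rotate u A = X' then 1 else (0::int))" for u
  have per: "h (u + p ^ i) = h u" for u
  proof -
    have "rotate (u + p ^ i) A = rotate (p ^ i) (rotate u A)" by (simp add: rotate_rotate add.commute)
    moreover have "rotate (p ^ i) (rotate u A) = X' \<longleftrightarrow> rotate u A = X'"
      using rotate_inj[of "p ^ i" "rotate u A" X'] pX by auto
    ultimately show ?thesis by (simp add: h_def)
  qed
  \<comment> \<open>undo the rotation of \<open>X'\<close> by completing it to a full turn \<open>p ^ k\<close>\<close>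
  have "rotate t A = rotate s X' \<longleftrightarrow> rotate (t + p ^ k - s) A = X'" if "s < p ^ i" for s
  proof -
    have "rotate (p ^ k - s) (rotate s X') = X'" "rotate (p ^ k - s) (rotate t A) = rotate (t + p ^ k - s) A"
      using that pik lX by (simp_all add: rotate_rotate add.commute)
    then show ?thesis using rotate_inj[of "p ^ k - s" "rotate t A" "rotate s X'"] by metis
  qed
  then have "(\<Sum>s<p ^ i. if rotate t A = rotate s X' then 1 else (0::int))
      = (\<Sum>s<p ^ i. h ((t + p ^ k - p ^ i) + p ^ i - s))"
    using pik by (intro sum.cong) (auto simp: h_def)
  also have "\<dots> = (\<Sum>s<p ^ i. h s)" by (rule sum_periodic_reflect[of h, OF per])
  finally show ?thesis by (simp add: X'_def h_def)
next
  case False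
  have "length (lpow (p ^ (k - i)) x) = p ^ k" using x ik by (simp add: power_add[symmetric])
  then have "rotate t A \<noteq> rotate s (lpow (p ^ (k - i)) x)" "rotate s A \<noteq> lpow (p ^ (k - i)) x" for s
    using False by (metis length_rotate)+
  then show ?thesis by simp
qed

lemma ghost_star_Vtau_le:
  fixes x :: "'a list" and y :: "'b list"
  assumes p0: "0 < p" and ij: "i \<le> j" and x: "length x = p ^ i" and y: "length y = p ^ j"
  shows "ghost_star (witt_ghost p n (Vtau i x)) (witt_ghost p n (Vtau j y)) k L =
    (\<Sum>s<p ^ i. witt_ghost p n (Vtau j (zip (lpow (p ^ (j - i)) (rotate s x)) y)) k L)"
proof -
  have z: "length (zip (lpow (p ^ (j - i)) (rotate s x)) y) = p ^ j" for s
    using x y ij by (simp add: power_add[symmetric])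
  show ?thesis
  proof (cases "k \<le> n \<and> j \<le> k")
    case True
    then have ik: "i \<le> k" using ij by simp
    define X' Y' A B
      where "X' = lpow (p ^ (k - i)) x" and "Y' = lpow (p ^ (k - j)) y"
        and "A = map fst L" and "B = map snd L"
    define a where "a t s = (if rotate t A = rotate s X' then 1 else (0::int))" for t s
    define b where "b t = (if rotate t B = Y' then 1 else (0::int))" for t
    have lpow_z: "lpow (p ^ (k - j)) (zip (lpow (p ^ (j - i)) (rotate s x)) y) = zip (rotate s X') Y'"
      for s
    proof -
      have "p ^ (k - j) * p ^ (j - i) = p ^ (k - i)" using ij True by (simp add: power_add[symmetric])
      then show ?thesis using x y ij
        by (simp add: lpow_zip lpow_lpow rotate_lpow X'_def Y'_def power_add[symmetric])
    qed
    have "(\<Sum>s<p ^ i. witt_ghost p n (Vtau j (zip (lpow (p ^ (j - i)) (rotate s x)) y)) k L)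
        = (\<Sum>s<p ^ i. \<Sum>t<p ^ j. a t s * b t)"
      using True x y ik
      by (intro sum.cong) (simp_all add: witt_ghost_Vtau[OF p0 z] lpow_z rotate_eq_zip_indicator
          a_def b_def A_def B_def X'_def Y'_def power_add[symmetric])
    also have "\<dots> = (\<Sum>t<p ^ j. b t * (\<Sum>s<p ^ i. a t s))"
      by (subst sum.swap) (simp add: sum_distrib_left mult.commute)
    also have "\<dots> = (\<Sum>t<p ^ j. b t) * (\<Sum>s<p ^ i. if rotate s A = X' then 1 else 0)"
      unfolding a_def X'_def orbit_count_rotate[OF p0 x ik] by (simp add: sum_distrib_right)
    finally show ?thesis
      using True ik by (simp add: ghost_star_def witt_ghost_Vtau[OF p0] x y A_def B_def X'_def
          Y'_def b_def mult.commute)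
  qed (use z in \<open>auto simp: ghost_star_def witt_ghost_Vtau[OF p0] x y\<close>)
qed

lemma ghost_star_swap:
  "ghost_star A B k L = ghost_star B A k (map prod.swap L)"
  by (simp add: ghost_star_def comp_def)

lemma witt_ghost_Vtau_map:
  assumes p0: "0 < p" and f: "inj f" and z: "length z = p ^ i"
  shows "witt_ghost p n (Vtau i (map f z)) k (map f L) = witt_ghost p n (Vtau i z) k L"
proof -
  have "lpow m (map f z) = map f (lpow m z)" for m by (simp add: map_concat)
  then show ?thesis using z by (simp add: witt_ghost_Vtau[OF p0] rotate_map inj_map_eq_map[OF f])
qed

lemma ghost_star_Vtau_ge:
  fixes x :: "'a list" and y :: "'b list"
  assumes p0: "0 < p" and ji: "j \<le> i" and x: "length x = p ^ i" and y: "length y = p ^ j"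
  shows "ghost_star (witt_ghost p n (Vtau i x)) (witt_ghost p n (Vtau j y)) k L =
    (\<Sum>s<p ^ j. witt_ghost p n (Vtau i (zip x (lpow (p ^ (i - j)) (rotate s y)))) k L)"
proof -
  define z where "z s = zip (lpow (p ^ (i - j)) (rotate s y)) x" for s
  have z: "length (z s) = p ^ i" for s using x y ji by (simp add: z_def power_add[symmetric])
  have zip_swap: "map prod.swap (z s) = zip x (lpow (p ^ (i - j)) (rotate s y))" for s
    unfolding z_def by (subst (2) zip_commute) (simp add: prod.swap_def split_def)
  have "ghost_star (witt_ghost p n (Vtau i x)) (witt_ghost p n (Vtau j y)) k L
      = ghost_star (witt_ghost p n (Vtau j y)) (witt_ghost p n (Vtau i x)) k (map prod.swap L)"
    by (rule ghost_star_swap)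
  also have "\<dots> = (\<Sum>s<p ^ j. witt_ghost p n (Vtau i (z s)) k (map prod.swap L))"
    unfolding z_def by (rule ghost_star_Vtau_le[OF p0 ji y x])
  also have "\<dots> = (\<Sum>s<p ^ j. witt_ghost p n (Vtau i (map prod.swap (z s))) k L)"
  proof (rule sum.cong[OF refl])
    fix s
    have "map prod.swap (map prod.swap L) = L" by (simp add: map_idI)
    moreover have "inj prod.swap" by (metis injI swap_swap)
    ultimately show "witt_ghost p n (Vtau i (z s)) k (map prod.swap L) =
        witt_ghost p n (Vtau i (map prod.swap (z s))) k L"
      using witt_ghost_Vtau_map[OF p0 _ z[of s], of prod.swap n k "map prod.swap L"] by simp
  qed
  finally show ?thesis by (simp only: zip_swap)
qed

theorem proposition1p9:
  fixes p n :: nat and X :: "'a set" and Y :: "'b set"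
  assumes "prime (p::nat)"
  shows "(\<forall>R. orbit_reps X p n R \<longrightarrow>
           bij_betw (lincomb p n) (coeffs n R) (witt_W X p n)) \<and>
         (\<forall>i j x y. i \<le> j \<and> j \<le> n \<and> length x = p ^ i \<and> set x \<subseteq> X
           \<and> length y = p ^ j \<and> set y \<subseteq> Y \<longrightarrow>
           ghost_star (witt_ghost p n (Vtau i x)) (witt_ghost p n (Vtau j y)) =
           (\<lambda>k L. \<Sum>s<p ^ i. witt_ghost p n
               (Vtau j (zip (concat (replicate (p ^ (j - i)) (rotate s x))) y)) k L)) \<and>
         (\<forall>i j x y. j \<le> i \<and> i \<le> n \<and> length x = p ^ i \<and> set x \<subseteq> X
           \<and> length y = p ^ j \<and> set y \<subseteq> Y \<longrightarrow>
           ghost_star (witt_ghost p n (Vtau i x)) (witt_ghost p n (Vtau j y)) =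
           (\<lambda>k L. \<Sum>s<p ^ j. witt_ghost p n
               (Vtau i (zip x (concat (replicate (p ^ (i - j)) (rotate s y))))) k L))"
proof -
  have p0: "0 < p" using assms prime_gt_0_nat by blast
  show ?thesis
    using bij_betw_lincomb_witt_W[OF assms] ghost_star_Vtau_le[OF p0] ghost_star_Vtau_ge[OF p0]
    by (auto simp: fun_eq_iff)
qed
end
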